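(* Let $M=(E,\mathcal{I})$ be a matroid, $m,\Delta$ positive integers, $W:E\to\{-\Delta,\dots,\Delta\}^m$ weight vectors and $\mu\ge0$. Let $A,B\in\mathcal{I}$ be disjoint with $|A|=|B|=k$ and $\|W(A)-W(B)\|_1\le\mu$, and let $d\in\mathbb{Z}^m$. Then there exist unicolor sets $A'\subseteq A$, $B'\subseteq B$ of equal cardinality such that (i) $(A\setminus A')\cup B'\in\mathcal{I}$, (ii) $|A'|=|B'|\ge\dfrac{k-\|d\|_1\mu}{(2\|d\|_1\Delta+1)^2(2\Delta+1)^{2m}}$, and (iii) $d^{\mathsf T}W(a)\ge d^{\mathsf T}W(b)$ for each $a\in A'$ and $b\in B'$.
   Context: $W(S)=\sum_{e\in S}W(e)$. A set $S\subseteq E$ is unicolor if $W(a)=W(b)$ for all $a,b\in S$. *)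

theory Defs
  imports Complex_Main
begin

definition matroid :: "'e set \<Rightarrow> ('e set \<Rightarrow> bool) \<Rightarrow> bool" where
  "matroid E indep \<longleftrightarrow>
     finite E \<and>
     (\<forall>X. indep X \<longrightarrow> X \<subseteq> E) \<and>
     indep {} \<and>
     (\<forall>X Y. indep X \<longrightarrow> Y \<subseteq> X \<longrightarrow> indep Y) \<and>
     (\<forall>X Y. indep X \<longrightarrow> indep Y \<longrightarrow> card X < card Y \<longrightarrow>
        (\<exists>y\<in>Y - X. indep (insert y X)))"

text \<open>Weight vectors in Z^m are represented as functions nat => int, only indices i < m matter.\<close>
definition wsum :: "('e \<Rightarrow> nat \<Rightarrow> int) \<Rightarrow> 'e set \<Rightarrow> nat \<Rightarrow> int" where
  "wsum W S = (\<lambda>i. \<Sum>e\<in>S. W e i)"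

definition norm1 :: "nat \<Rightarrow> (nat \<Rightarrow> int) \<Rightarrow> int" where
  "norm1 m v = (\<Sum>i<m. \<bar>v i\<bar>)"

definition dotp :: "nat \<Rightarrow> (nat \<Rightarrow> int) \<Rightarrow> (nat \<Rightarrow> int) \<Rightarrow> int" where
  "dotp m u v = (\<Sum>i<m. u i * v i)"

definition unicolor :: "nat \<Rightarrow> ('e \<Rightarrow> nat \<Rightarrow> int) \<Rightarrow> 'e set \<Rightarrow> bool" where
  "unicolor m W S \<longleftrightarrow> (\<forall>a\<in>S. \<forall>b\<in>S. \<forall>i<m. W a i = W b i)"

end

theory Submission
  imports Defs "HOL-Library.FuncSet"
begin

(*
  Let f(e) = d^T W(e), so that |f| <= D = ||d||_1 Delta on E. Summing over the 2D + 1 integer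
  thresholds t in [-D, D] the number of a in A with f(a) >= t minus the number of b in B with
  f(b) > t gives f(A) - f(B) + k >= k - ||d||_1 mu, so some threshold t gets a (2D + 1)-th of it.

  Call (P, Q) exchangeable in A if P is a subset of A, Q is disjoint from A, |P| = |Q| and
  (A - P) union Q is independent. Augmenting A - S from (A - P) union Q, or (A - P) union T from
  A, shows that either side of an exchangeable pair can be shrunk to any subset S or T while the
  other side shrinks to a set of the same size. Starting from (A, B), shrink B to its elements
  with f <= t and then A to its elements with f >= t: this loses at most the elements not counted
  at t. Two pigeonhole steps over the (2 Delta + 1)^m weight vectors, each followed by shrinking
  the other side, make both sides unicolor at the cost of a factor (2 Delta + 1)^(2m).
*)

lemma matroid_indep_finite: "matroid E indep \<Longrightarrow> indep X \<Longrightarrow> finite X"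
  unfolding matroid_def by (meson finite_subset)

lemma matroid_indep_subset_ground: "matroid E indep \<Longrightarrow> indep X \<Longrightarrow> X \<subseteq> E"
  unfolding matroid_def by blast

lemma matroid_indep_subset: "matroid E indep \<Longrightarrow> indep X \<Longrightarrow> Y \<subseteq> X \<Longrightarrow> indep Y"
  unfolding matroid_def by blast

lemma matroid_augment:
  "matroid E indep \<Longrightarrow> indep X \<Longrightarrow> indep Y \<Longrightarrow> card X < card Y \<Longrightarrow> \<exists>y\<in>Y - X. indep (insert y X)"
  unfolding matroid_def by blast

lemma matroid_augment_to_card:
  assumes M: "matroid E indep" and "indep X" "indep Y" "card Y \<le> card X"
  shows "\<exists>Z \<subseteq> X - Y. indep (Y \<union> Z) \<and> card (Y \<union> Z) = card X"
  using assms(3,4)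
proof (induction "card X - card Y" arbitrary: Y)
  case 0
  then show ?case by (intro exI[of _ "{}"]) auto
next
  case (Suc n)
  then obtain y where y: "y \<in> X - Y" "indep (insert y Y)"
    using matroid_augment[OF M \<open>indep Y\<close> \<open>indep X\<close>] by force
  have "card (insert y Y) = Suc (card Y)"
    using y matroid_indep_finite[OF M \<open>indep Y\<close>] by simp
  then obtain Z where "Z \<subseteq> X - insert y Y" "indep (insert y Y \<union> Z)" "card (insert y Y \<union> Z) = card X"
    using Suc.hyps(1)[of "insert y Y"] Suc.hyps(2) y(2) by force
  then show ?case using y by (intro exI[of _ "insert y Z"]) auto
qed

lemma pigeonhole_fiber:
  assumes "finite S" "finite C" "col \<in> S \<rightarrow> C"
  shows "\<exists>c. card S \<le> card C * card {x\<in>S. col x = c}"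
proof (cases "S = {}")
  case False
  then have "C \<noteq> {}" using assms(3) by blast
  then obtain c where "card S \<le> card (col -` {c} \<inter> S) * card C"
    using pigeonhole_card[OF assms(3,1,2)] by blast
  moreover have "col -` {c} \<inter> S = {x\<in>S. col x = c}" by blast
  ultimately show ?thesis by (metis mult.commute)
qed simp

lemma sum_card_threshold:
  fixes g :: "'a \<Rightarrow> int"
  assumes "finite S" and "\<And>x. x \<in> S \<Longrightarrow> L - 1 \<le> g x \<and> g x \<le> U"
  shows "(\<Sum>t\<in>{L..U}. int (card {x\<in>S. t \<le> g x})) = (\<Sum>x\<in>S. g x - L + 1)"
proof -
  have "(\<Sum>t\<in>{L..U}. int (card {x\<in>S. t \<le> g x})) = (\<Sum>t\<in>{L..U}. \<Sum>x\<in>S. if t \<le> g x then 1 else 0)"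
    using assms(1) by (simp add: sum.inter_filter[symmetric])
  also have "\<dots> = (\<Sum>x\<in>S. \<Sum>t\<in>{L..U}. if t \<le> g x then 1 else 0)"
    by (rule sum.swap)
  also have "\<dots> = (\<Sum>x\<in>S. g x - L + 1)"
  proof (rule sum.cong)
    fix x assume "x \<in> S"
    have "{t \<in> {L..U}. t \<le> g x} = {L..g x}" using assms(2)[OF \<open>x \<in> S\<close>] by auto
    then show "(\<Sum>t\<in>{L..U}. if t \<le> g x then 1 else 0) = g x - L + 1"
      using assms(2)[OF \<open>x \<in> S\<close>] by (simp add: sum.inter_filter[symmetric])
  qed simp
  finally show ?thesis .
qed

lemma exists_threshold:
  fixes f :: "'a \<Rightarrow> int"
  assumes "finite A" "finite B" "card A = card B" "0 \<le> D"
    and "\<And>x. x \<in> A \<union> B \<Longrightarrow> \<bar>f x\<bar> \<le> D"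
  shows "\<exists>t. (\<Sum>a\<in>A. f a) - (\<Sum>b\<in>B. f b) + int (card A)
             \<le> (2 * D + 1) * (int (card {a\<in>A. t \<le> f a}) - int (card {b\<in>B. t < f b}))"
proof -
  define cnt where "cnt t = int (card {a\<in>A. t \<le> f a}) - int (card {b\<in>B. t < f b})" for t
  have bound: "-D \<le> f x \<and> f x \<le> D" if "x \<in> A \<union> B" for x
    using assms(5)[OF that] by auto
  have sum_A: "(\<Sum>t\<in>{-D..D}. int (card {a\<in>A. t \<le> f a})) = (\<Sum>a\<in>A. f a - (-D) + 1)"
    using assms(1) by (rule sum_card_threshold) (use bound in force)
  have shift: "{b\<in>B. t < f b} = {b\<in>B. t \<le> f b - 1}" for t by auto
  have sum_B: "(\<Sum>t\<in>{-D..D}. int (card {b\<in>B. t < f b})) = (\<Sum>b\<in>B. f b - 1 - (-D) + 1)"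
    unfolding shift using assms(2) by (rule sum_card_threshold) (use bound in force)
  have "(\<Sum>t\<in>{-D..D}. cnt t) = (\<Sum>a\<in>A. f a + D + 1) - (\<Sum>b\<in>B. f b + D)"
    unfolding cnt_def sum_subtractf sum_A sum_B by simp
  also have "\<dots> = (\<Sum>a\<in>A. f a) - (\<Sum>b\<in>B. f b) + int (card A)"
    using assms(3) by (simp add: sum.distrib algebra_simps)
  finally have sum_cnt: "(\<Sum>t\<in>{-D..D}. cnt t) = (\<Sum>a\<in>A. f a) - (\<Sum>b\<in>B. f b) + int (card A)" .
  have "Max (cnt ` {-D..D}) \<in> cnt ` {-D..D}" using assms(4) by (intro Max_in) auto
  then obtain t where "cnt t = Max (cnt ` {-D..D})" by auto
  then have "(\<Sum>s\<in>{-D..D}. cnt s) \<le> of_nat (card {-D..D}) * cnt t"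
    by (intro sum_bounded_above) simp
  also have "of_nat (card {-D..D}) = 2 * D + 1" using assms(4) by simp
  finally show ?thesis unfolding sum_cnt unfolding cnt_def by blast
qed

definition exchangeable :: "('e set \<Rightarrow> bool) \<Rightarrow> 'e set \<Rightarrow> 'e set \<Rightarrow> 'e set \<Rightarrow> bool" where
  "exchangeable indep A P Q \<longleftrightarrow> P \<subseteq> A \<and> A \<inter> Q = {} \<and> card P = card Q \<and> indep (A - P \<union> Q)"

context
  fixes E :: "'e set" and indep :: "'e set \<Rightarrow> bool" and A :: "'e set"
  assumes matroid: "matroid E indep" and indep_A: "indep A"
begin

lemma exchangeable_finite:
  assumes "exchangeable indep A P Q"
  shows "finite P" "finite Q"
proof -
  have "finite A" "finite (A - P \<union> Q)"
    using assms matroid indep_A matroid_indep_finite unfolding exchangeable_def by blast+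
  then show "finite P" "finite Q"
    using assms unfolding exchangeable_def by (auto intro: finite_subset)
qed

lemma exchangeable_card_eq:
  assumes "exchangeable indep A P Q"
  shows "card (A - P \<union> Q) = card A"
proof -
  have "finite A" using matroid indep_A by (rule matroid_indep_finite)
  note fin = exchangeable_finite[OF assms]
  have P: "P \<subseteq> A" "A \<inter> Q = {}" "card P = card Q"
    using assms unfolding exchangeable_def by auto
  have "card (A - P \<union> Q) = card (A - P) + card Q"
    using P(2) \<open>finite A\<close> fin by (intro card_Un_disjoint) auto
  also have "card (A - P) = card A - card P"
    using card_Diff_subset[OF fin(1) P(1)] .
  finally show ?thesis
    using card_mono[OF \<open>finite A\<close> P(1)] P(3) by simp
qed

lemma exchangeable_shrink_left:
  assumes PQ: "exchangeable indep A P Q" and "S \<subseteq> P"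
  shows "\<exists>T \<subseteq> Q. exchangeable indep A S T"
proof -
  have "finite A" using matroid indep_A by (rule matroid_indep_finite)
  note fin = exchangeable_finite[OF PQ]
  have P: "P \<subseteq> A" "A \<inter> Q = {}" "indep (A - P \<union> Q)"
    using PQ unfolding exchangeable_def by auto
  have "finite S" using fin(1) \<open>S \<subseteq> P\<close> by (rule finite_subset[rotated])
  have card_AS: "card (A - S) = card A - card S" "card S \<le> card A"
    using \<open>S \<subseteq> P\<close> P(1) \<open>finite A\<close> \<open>finite S\<close> by (auto intro: card_Diff_subset card_mono)
  have "indep (A - S)" using matroid indep_A by (rule matroid_indep_subset) blast
  moreover have "card (A - S) \<le> card (A - P \<union> Q)"
    using card_AS exchangeable_card_eq[OF PQ] by simp
  ultimately obtain Z where Z: "Z \<subseteq> (A - P \<union> Q) - (A - S)" "indep (A - S \<union> Z)"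
      "card (A - S \<union> Z) = card A"
    using matroid_augment_to_card[OF matroid P(3)] exchangeable_card_eq[OF PQ] by auto
  have "Z \<subseteq> Q" using Z(1) \<open>S \<subseteq> P\<close> by blast
  then have "card (A - S \<union> Z) = card (A - S) + card Z"
    using P(2) \<open>finite A\<close> fin by (intro card_Un_disjoint) (auto intro: finite_subset)
  then have "card S = card Z" using Z(3) card_AS by linarith
  then show ?thesis
    using \<open>Z \<subseteq> Q\<close> Z(2) \<open>S \<subseteq> P\<close> P unfolding exchangeable_def by blast
qed

lemma exchangeable_shrink_right:
  assumes PQ: "exchangeable indep A P Q" and "T \<subseteq> Q"
  shows "\<exists>S \<subseteq> P. exchangeable indep A S T"
proof -
  have "finite A" using matroid indep_A by (rule matroid_indep_finite)
  note fin = exchangeable_finite[OF PQ]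
  have P: "P \<subseteq> A" "A \<inter> Q = {}" "card P = card Q" "indep (A - P \<union> Q)"
    using PQ unfolding exchangeable_def by auto
  have "finite T" using fin(2) \<open>T \<subseteq> Q\<close> by (rule finite_subset[rotated])
  have "card T \<le> card P" using P(3) fin(2) \<open>T \<subseteq> Q\<close> by (simp add: card_mono)
  have card_AP: "card (A - P) = card A - card P" "card P \<le> card A"
    using P(1) \<open>finite A\<close> fin(1) by (auto intro: card_Diff_subset card_mono)
  have card_Y: "card (A - P \<union> T) = card (A - P) + card T"
    using P(2) \<open>finite A\<close> \<open>finite T\<close> \<open>T \<subseteq> Q\<close> by (intro card_Un_disjoint) auto
  have "indep (A - P \<union> T)" using matroid P(4) by (rule matroid_indep_subset) (use \<open>T \<subseteq> Q\<close> in blast)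
  moreover have "card (A - P \<union> T) \<le> card A"
    using card_Y card_AP \<open>card T \<le> card P\<close> by linarith
  ultimately obtain Z where Z: "Z \<subseteq> A - (A - P \<union> T)" "indep (A - P \<union> T \<union> Z)"
      "card (A - P \<union> T \<union> Z) = card A"
    using matroid_augment_to_card[OF matroid indep_A] by blast
  have "Z \<subseteq> P" using Z(1) by blast
  have "finite Z" using fin(1) \<open>Z \<subseteq> P\<close> by (rule finite_subset[rotated])
  have "card (A - P \<union> T \<union> Z) = card (A - P \<union> T) + card Z"
    using Z(1) \<open>finite A\<close> \<open>finite T\<close> \<open>finite Z\<close> by (intro card_Un_disjoint) auto
  moreover have "card (P - Z) = card P - card Z"
    using \<open>finite Z\<close> \<open>Z \<subseteq> P\<close> by (rule card_Diff_subset)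
  ultimately have "card (P - Z) = card T"
    using Z(3) card_Y card_AP \<open>card T \<le> card P\<close> by linarith
  moreover have "A - (P - Z) \<union> T = A - P \<union> T \<union> Z" using \<open>Z \<subseteq> P\<close> P(1) by blast
  ultimately show ?thesis
    using Z(2) P(1,2) \<open>T \<subseteq> Q\<close> unfolding exchangeable_def by (intro exI[of _ "P - Z"]) auto
qed

lemma exchangeable_restrict:
  assumes PQ: "exchangeable indep A P Q"
  shows "\<exists>P' Q'. P' \<subseteq> P \<inter> X \<and> Q' \<subseteq> Q \<inter> Y \<and> exchangeable indep A P' Q' \<and>
           card P \<le> card P' + card (P - X) + card (Q - Y)"
proof -
  obtain S where S: "S \<subseteq> P" "exchangeable indep A S (Q \<inter> Y)"
    using exchangeable_shrink_right[OF PQ] by blast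
  obtain T where T: "T \<subseteq> Q \<inter> Y" "exchangeable indep A (S \<inter> X) T"
    using exchangeable_shrink_left[OF S(2)] by blast
  have "card S \<le> card (S \<inter> X) + card (S - X)"
    using card_Un_le[of "S \<inter> X" "S - X"] by (simp add: Int_Diff_Un)
  moreover have "card (S - X) \<le> card (P - X)"
    using S(1) exchangeable_finite(1)[OF PQ] by (intro card_mono) auto
  moreover have "card Q \<le> card (Q \<inter> Y) + card (Q - Y)"
    using card_Un_le[of "Q \<inter> Y" "Q - Y"] by (simp add: Int_Diff_Un)
  moreover have "card P = card Q" "card S = card (Q \<inter> Y)"
    using PQ S(2) unfolding exchangeable_def by auto
  ultimately have "card P \<le> card (S \<inter> X) + card (P - X) + card (Q - Y)"
    by linarith
  moreover have "S \<inter> X \<subseteq> P \<inter> X" using S(1) by blast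
  ultimately show ?thesis
    using T by blast
qed

lemma exchangeable_monochromatic:
  assumes PQ: "exchangeable indep A P Q" and "finite C" and col: "col \<in> P \<union> Q \<rightarrow> C"
  shows "\<exists>P' Q'. P' \<subseteq> P \<and> Q' \<subseteq> Q \<and> exchangeable indep A P' Q' \<and>
           (\<forall>x\<in>P'. \<forall>y\<in>P'. col x = col y) \<and> (\<forall>x\<in>Q'. \<forall>y\<in>Q'. col x = col y) \<and>
           card P \<le> card C ^ 2 * card P'"
proof -
  have "col \<in> P \<rightarrow> C" using col Pi_anti_mono[of P "P \<union> Q"] by blast
  then obtain c where c: "card P \<le> card C * card {x\<in>P. col x = c}"
    using pigeonhole_fiber[OF exchangeable_finite(1)[OF PQ] \<open>finite C\<close>] by blast
  obtain T where T: "T \<subseteq> Q" "exchangeable indep A {x\<in>P. col x = c} T"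
    using exchangeable_shrink_left[OF PQ, of "{x\<in>P. col x = c}"] by auto
  have "col \<in> T \<rightarrow> C" using col Pi_anti_mono[of T "P \<union> Q"] T(1) by blast
  then obtain c' where c': "card T \<le> card C * card {y\<in>T. col y = c'}"
    using pigeonhole_fiber[OF exchangeable_finite(2)[OF T(2)] \<open>finite C\<close>] by blast
  define Q' where "Q' = {y\<in>T. col y = c'}"
  obtain P' where P': "P' \<subseteq> {x\<in>P. col x = c}" "exchangeable indep A P' Q'"
    using exchangeable_shrink_right[OF T(2), of Q'] unfolding Q'_def by auto
  have "card {x\<in>P. col x = c} = card T" "card P' = card Q'"
    using T(2) P'(2) unfolding exchangeable_def by auto
  have "card P \<le> card C * card T"
    using c \<open>card {x\<in>P. col x = c} = card T\<close> by simp
  also have "\<dots> \<le> card C * (card C * card Q')"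
    using c' unfolding Q'_def by (rule mult_le_mono2)
  finally have "card P \<le> card C ^ 2 * card P'"
    using \<open>card P' = card Q'\<close> by (simp add: power2_eq_square)
  moreover have "P' \<subseteq> P" "\<forall>x\<in>P'. \<forall>y\<in>P'. col x = col y" using P'(1) by auto
  moreover have "Q' \<subseteq> Q" "\<forall>x\<in>Q'. \<forall>y\<in>Q'. col x = col y" using T(1) unfolding Q'_def by auto
  ultimately show ?thesis
    using P'(2) by blast
qed

lemma exchangeable_separated:
  fixes f :: "'e \<Rightarrow> int"
  assumes AB: "exchangeable indep A A B" and "0 \<le> D" and "\<And>x. x \<in> A \<union> B \<Longrightarrow> \<bar>f x\<bar> \<le> D"
  shows "\<exists>P Q. P \<subseteq> A \<and> Q \<subseteq> B \<and> exchangeable indep A P Q \<and> (\<forall>a\<in>P. \<forall>b\<in>Q. f b \<le> f a) \<and>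
           (\<Sum>a\<in>A. f a) - (\<Sum>b\<in>B. f b) + int (card A) \<le> (2 * D + 1) * int (card P)"
proof -
  note fin = exchangeable_finite[OF AB]
  have "card A = card B" using AB unfolding exchangeable_def by blast
  then obtain t where t: "(\<Sum>a\<in>A. f a) - (\<Sum>b\<in>B. f b) + int (card A)
      \<le> (2 * D + 1) * (int (card {a\<in>A. t \<le> f a}) - int (card {b\<in>B. t < f b}))"
    using exists_threshold[OF fin] assms(2,3) by blast
  define X where "X = {a\<in>A. t \<le> f a}"
  define Y where "Y = {b\<in>B. f b \<le> t}"
  obtain P Q where P: "P \<subseteq> A \<inter> X" and Q: "Q \<subseteq> B \<inter> Y" and PQ: "exchangeable indep A P Q"
    and card_P: "card A \<le> card P + card (A - X) + card (B - Y)"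
    using exchangeable_restrict[OF AB, of X Y] by blast
  have "card (A - X) = card A - card X" "card X \<le> card A"
    unfolding X_def using fin(1) by (auto intro: card_Diff_subset card_mono)
  moreover have "B - Y = {b\<in>B. t < f b}" unfolding Y_def by auto
  ultimately have "card X \<le> card P + card {b\<in>B. t < f b}"
    using card_P by auto
  then have "int (card {a\<in>A. t \<le> f a}) - int (card {b\<in>B. t < f b}) \<le> int (card P)"
    unfolding X_def by linarith
  then have "(\<Sum>a\<in>A. f a) - (\<Sum>b\<in>B. f b) + int (card A) \<le> (2 * D + 1) * int (card P)"
    using t \<open>0 \<le> D\<close>
    by (meson mult_left_mono order.trans add_nonneg_nonneg zero_le_one mult_nonneg_nonneg zero_le_numeral)
  moreover have "\<forall>a\<in>P. \<forall>b\<in>Q. f b \<le> f a"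
    using P Q unfolding X_def Y_def by force
  ultimately show ?thesis
    using P Q PQ by blast
qed

lemma exchangeable_separated_monochromatic:
  fixes f :: "'e \<Rightarrow> int" and col :: "'e \<Rightarrow> 'c"
  assumes AB: "exchangeable indep A A B" and "0 \<le> D"
    and f: "\<And>x. x \<in> A \<union> B \<Longrightarrow> \<bar>f x\<bar> \<le> D"
    and "finite C" and col: "col \<in> A \<union> B \<rightarrow> C"
  shows "\<exists>P Q. P \<subseteq> A \<and> Q \<subseteq> B \<and> exchangeable indep A P Q \<and> (\<forall>a\<in>P. \<forall>b\<in>Q. f b \<le> f a) \<and>
           (\<forall>x\<in>P. \<forall>y\<in>P. col x = col y) \<and> (\<forall>x\<in>Q. \<forall>y\<in>Q. col x = col y) \<and>
           (\<Sum>a\<in>A. f a) - (\<Sum>b\<in>B. f b) + int (card A)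
             \<le> (2 * D + 1) * int (card C) ^ 2 * int (card P)"
proof -
  obtain P Q where PQ: "P \<subseteq> A" "Q \<subseteq> B" "exchangeable indep A P Q" "\<forall>a\<in>P. \<forall>b\<in>Q. f b \<le> f a"
    and card_P: "(\<Sum>a\<in>A. f a) - (\<Sum>b\<in>B. f b) + int (card A) \<le> (2 * D + 1) * int (card P)"
    using exchangeable_separated[where f = f, OF AB \<open>0 \<le> D\<close> f] by blast
  have "col \<in> P \<union> Q \<rightarrow> C" using col Pi_anti_mono[of "P \<union> Q" "A \<union> B"] PQ(1,2) by blast
  then obtain P' Q' where P'Q': "P' \<subseteq> P" "Q' \<subseteq> Q" "exchangeable indep A P' Q'"
      "\<forall>x\<in>P'. \<forall>y\<in>P'. col x = col y" "\<forall>x\<in>Q'. \<forall>y\<in>Q'. col x = col y"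
    and card_P': "card P \<le> card C ^ 2 * card P'"
    using exchangeable_monochromatic[where col = col, OF PQ(3) \<open>finite C\<close>] by blast
  have "int (card P) \<le> int (card C) ^ 2 * int (card P')"
    using card_P' by (metis of_nat_le_iff of_nat_mult of_nat_power)
  then have "(2 * D + 1) * int (card P) \<le> (2 * D + 1) * int (card C) ^ 2 * int (card P')"
    using \<open>0 \<le> D\<close> by (simp add: mult.assoc mult_left_mono)
  then have "(\<Sum>a\<in>A. f a) - (\<Sum>b\<in>B. f b) + int (card A)
      \<le> (2 * D + 1) * int (card C) ^ 2 * int (card P')"
    using card_P by (rule order.trans[rotated])
  moreover have "P' \<subseteq> A" "Q' \<subseteq> B" "\<forall>a\<in>P'. \<forall>b\<in>Q'. f b \<le> f a"
    using PQ P'Q'(1,2) by blast+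
  ultimately show ?thesis
    using P'Q'(3-5) by blast
qed

end

lemma norm1_nonneg: "0 \<le> norm1 m v"
  unfolding norm1_def by (simp add: sum_nonneg)

lemma abs_le_norm1: "i < m \<Longrightarrow> \<bar>v i\<bar> \<le> norm1 m v"
  unfolding norm1_def by (rule member_le_sum) auto

lemma abs_dotp_le:
  assumes "\<And>i. i < m \<Longrightarrow> \<bar>w i\<bar> \<le> c"
  shows "\<bar>dotp m d w\<bar> \<le> norm1 m d * c"
proof -
  have "\<bar>dotp m d w\<bar> \<le> (\<Sum>i<m. \<bar>d i * w i\<bar>)" unfolding dotp_def by (rule sum_abs)
  also have "\<dots> \<le> (\<Sum>i<m. \<bar>d i\<bar> * c)"
    by (rule sum_mono) (use assms in \<open>auto simp: abs_mult intro: mult_left_mono\<close>)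
  also have "\<dots> = norm1 m d * c" unfolding norm1_def by (simp add: sum_distrib_right)
  finally show ?thesis .
qed

lemma sum_dotp_diff:
  "(\<Sum>a\<in>A. dotp m d (W a)) - (\<Sum>b\<in>B. dotp m d (W b))
     = dotp m d (\<lambda>i. wsum W A i - wsum W B i)"
  unfolding dotp_def wsum_def
  by (simp add: sum.swap[of _ A] sum.swap[of _ B] sum_distrib_left right_diff_distrib sum_subtractf)

lemma sum_dotp_diff_ge:
  assumes "real_of_int (norm1 m (\<lambda>i. wsum W A i - wsum W B i)) \<le> \<mu>"
  shows "- (real_of_int (norm1 m d) * \<mu>)
           \<le> real_of_int ((\<Sum>a\<in>A. dotp m d (W a)) - (\<Sum>b\<in>B. dotp m d (W b)))"
proof -
  let ?diff = "(\<Sum>a\<in>A. dotp m d (W a)) - (\<Sum>b\<in>B. dotp m d (W b))"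
  have "\<bar>?diff\<bar> \<le> norm1 m d * norm1 m (\<lambda>i. wsum W A i - wsum W B i)"
    unfolding sum_dotp_diff by (rule abs_dotp_le) (rule abs_le_norm1)
  then have "real_of_int \<bar>?diff\<bar> \<le> real_of_int (norm1 m d) * \<mu>"
    using mult_left_mono[OF assms norm1_nonneg[of m d, THEN of_int_nonneg]]
    by (metis of_int_le_iff of_int_mult order.trans)
  then show ?thesis by linarith
qed

lemma unicolor_iff_restrict:
  "unicolor m W S \<longleftrightarrow> (\<forall>a\<in>S. \<forall>b\<in>S. restrict (W a) {..<m} = restrict (W b) {..<m})"
  unfolding unicolor_def by (auto simp: fun_eq_iff restrict_def)

lemma restrict_in_box:
  assumes "\<And>i. i < m \<Longrightarrow> - \<Delta> \<le> w i \<and> w i \<le> \<Delta>"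
  shows "restrict w {..<m} \<in> (\<Pi>\<^sub>E i\<in>{..<m}. {-\<Delta>..\<Delta>})"
  unfolding restrict_PiE_iff using assms by auto

lemma card_box:
  fixes \<Delta> :: int
  assumes "0 \<le> \<Delta>"
  shows "int (card (\<Pi>\<^sub>E i\<in>{..<m}. {-\<Delta>..\<Delta>})) = (2 * \<Delta> + 1) ^ m"
  using assms by (simp add: card_PiE)

lemma divide_le_of_int_le_mult:
  fixes R Q :: int
  assumes "R \<le> Q * int n" and "0 < Q" and "x \<le> real_of_int R"
  shows "x / real_of_int Q \<le> real n"
proof -
  have "real_of_int R \<le> real_of_int (Q * int n)"
    using assms(1) by (simp only: of_int_le_iff)
  then show ?thesis
    using assms(2,3) by (simp add: pos_divide_le_eq mult.commute)
qed

lemma exchangeable_unicolor_separated: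
  assumes M: "matroid E indep" and "indep A" and AB: "exchangeable indep A A B" and "0 \<le> \<Delta>"
    and W: "\<And>e i. e \<in> A \<union> B \<Longrightarrow> i < m \<Longrightarrow> - \<Delta> \<le> W e i \<and> W e i \<le> \<Delta>"
  shows "\<exists>P Q. P \<subseteq> A \<and> Q \<subseteq> B \<and> exchangeable indep A P Q \<and> unicolor m W P \<and> unicolor m W Q \<and>
           (\<forall>a\<in>P. \<forall>b\<in>Q. dotp m d (W b) \<le> dotp m d (W a)) \<and>
           (\<Sum>a\<in>A. dotp m d (W a)) - (\<Sum>b\<in>B. dotp m d (W b)) + int (card A)
             \<le> (2 * norm1 m d * \<Delta> + 1) * (2 * \<Delta> + 1) ^ (2 * m) * int (card P)"
proof -
  define D where "D = norm1 m d * \<Delta>"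
  define C where "C = (\<Pi>\<^sub>E i\<in>{..<m}. {-\<Delta>..\<Delta>})"
  have "0 \<le> D" unfolding D_def using norm1_nonneg \<open>0 \<le> \<Delta>\<close> by simp
  have dotp_bound: "\<bar>dotp m d (W x)\<bar> \<le> D" if "x \<in> A \<union> B" for x
    unfolding D_def by (rule abs_dotp_le) (use W that in \<open>force simp: abs_le_iff\<close>)
  have "finite C" unfolding C_def by (simp add: finite_PiE)
  have "restrict (W e) {..<m} \<in> C" if "e \<in> A \<union> B" for e
    unfolding C_def using W that by (intro restrict_in_box) blast
  then have col: "(\<lambda>e. restrict (W e) {..<m}) \<in> A \<union> B \<rightarrow> C" by blast
  have card_C: "int (card C) ^ 2 = (2 * \<Delta> + 1) ^ (2 * m)"
    unfolding C_def card_box[OF \<open>0 \<le> \<Delta>\<close>] by (simp add: power_mult[symmetric] mult.commute)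
  have D_eq: "2 * D + 1 = 2 * norm1 m d * \<Delta> + 1" unfolding D_def by simp
  show ?thesis
    using exchangeable_separated_monochromatic[where f = "\<lambda>e. dotp m d (W e)",
        OF M \<open>indep A\<close> AB \<open>0 \<le> D\<close> dotp_bound \<open>finite C\<close> col]
    unfolding unicolor_iff_restrict D_eq card_C by blast
qed

theorem lemma12:
  fixes E :: "'e set" and indep :: "'e set \<Rightarrow> bool"
    and m :: nat and \<Delta> :: int and W :: "'e \<Rightarrow> nat \<Rightarrow> int" and \<mu> :: real
    and A B :: "'e set" and k :: nat and d :: "nat \<Rightarrow> int"
  assumes "matroid E indep"
    and "m > 0" and "\<Delta> > 0"
    and "\<And>e i. e \<in> E \<Longrightarrow> i < m \<Longrightarrow> - \<Delta> \<le> W e i \<and> W e i \<le> \<Delta>"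
    and "\<mu> \<ge> 0"
    and "indep A" and "indep B" and "A \<inter> B = {}"
    and "card A = k" and "card B = k"
    and "real_of_int (norm1 m (\<lambda>i. wsum W A i - wsum W B i)) \<le> \<mu>"
  shows "\<exists>A' B'. A' \<subseteq> A \<and> B' \<subseteq> B \<and> unicolor m W A' \<and> unicolor m W B' \<and>
           card A' = card B' \<and>
           indep ((A - A') \<union> B') \<and>
           real (card A') \<ge> (real k - real_of_int (norm1 m d) * \<mu>) /
              (real_of_int ((2 * norm1 m d * \<Delta> + 1)^2 * (2 * \<Delta> + 1)^(2*m))) \<and>
           (\<forall>a\<in>A'. \<forall>b\<in>B'. dotp m d (W a) \<ge> dotp m d (W b))"
proof -
  define D where "D = norm1 m d * \<Delta>"
  have AB: "exchangeable indep A A B" using assms(7-10) unfolding exchangeable_def by auto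
  have "A \<union> B \<subseteq> E" using matroid_indep_subset_ground assms(1,6,7) by blast
  then have W: "\<And>e i. e \<in> A \<union> B \<Longrightarrow> i < m \<Longrightarrow> - \<Delta> \<le> W e i \<and> W e i \<le> \<Delta>"
    using assms(4) by blast
  obtain P Q where PQ: "P \<subseteq> A" "Q \<subseteq> B" "exchangeable indep A P Q" "unicolor m W P" "unicolor m W Q"
      "\<forall>a\<in>P. \<forall>b\<in>Q. dotp m d (W b) \<le> dotp m d (W a)"
    and card_P: "(\<Sum>a\<in>A. dotp m d (W a)) - (\<Sum>b\<in>B. dotp m d (W b)) + int k
      \<le> (2 * D + 1) * (2 * \<Delta> + 1) ^ (2 * m) * int (card P)"
    using exchangeable_unicolor_separated[where d = d and W = W and m = m and \<Delta> = \<Delta>,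
        OF assms(1,6) AB order.strict_implies_order[OF assms(3)] W]
    unfolding D_def assms(9) mult.assoc by blast
  define Q where "Q = (2 * D + 1) ^ 2 * (2 * \<Delta> + 1) ^ (2 * m)"
  have "0 \<le> D" unfolding D_def using norm1_nonneg assms(3) by simp
  \<comment> \<open>the argument only needs one of the two factors \<open>2 * D + 1\<close> of the stated bound\<close>
  then have "(2 * D + 1) * (2 * \<Delta> + 1) ^ (2 * m) \<le> Q"
    unfolding Q_def power2_eq_square using assms(3) by simp
  then have "(\<Sum>a\<in>A. dotp m d (W a)) - (\<Sum>b\<in>B. dotp m d (W b)) + int k \<le> Q * int (card P)"
    using card_P by (meson mult_right_mono of_nat_0_le_iff order.trans)
  moreover have "0 < Q" unfolding Q_def using \<open>0 \<le> D\<close> assms(3) by simp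
  moreover have "real k - real_of_int (norm1 m d) * \<mu>
      \<le> real_of_int ((\<Sum>a\<in>A. dotp m d (W a)) - (\<Sum>b\<in>B. dotp m d (W b)) + int k)"
    using sum_dotp_diff_ge[OF assms(11), of d] unfolding of_int_add of_int_of_nat_eq by linarith
  ultimately have "(real k - real_of_int (norm1 m d) * \<mu>) / real_of_int Q \<le> real (card P)"
    by (rule divide_le_of_int_le_mult)
  moreover have "Q = (2 * norm1 m d * \<Delta> + 1) ^ 2 * (2 * \<Delta> + 1) ^ (2 * m)"
    unfolding Q_def D_def by (simp add: mult.assoc)
  ultimately show ?thesis
    using PQ unfolding exchangeable_def by blast
qed

end
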